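(* Let $v\in[2,m-1]$ and $F\subseteq[m]\setminus\{v\}$. Then $F$ is a lower facet of $C(m,2d+1)\backslash v$ if and only if $F\cup\{y\}$ is a facet of $C([m]_{v+},2d+1)$. Dually, $F$ is an upper facet of $C(m,2d+1)\backslash v$ if and only if $F\cup\{x\}$ is a facet of $C([m]_{v+},2d+1)$.
   Context: For a finite ordered set $V$, a $(2d+1)$-subset $F\subseteq V$ is a facet of the cyclic polytope $C(V,2d+1)$ iff either every $w\in V\setminus F$ has an even number of elements of $F$ above it, or every such $w$ has an odd number (Gale's evenness criterion). Every facet of $C(m,2d+1)$ is uniquely a disjoint union of pairs $\{i,i+1\}$ of consecutive integers together with exactly one of the elements $1$ or $m$. For $v\in[2,m-1]$, the facets of the vertex figure $C(m,2d+1)\backslash v$ are the sets $F\subseteq[m]\setminus\{v\}$ with $F\cup\{v\}$ a facet of $C(m,2d+1)$; such $F$ is a lower facet of $C(m,2d+1)\backslash v$ if in this decomposition of $F\cup\{v\}$ the element $v$ is paired with $v+1$, and an upper facet if $v$ is paired with $v-1$. $[m]_{v+}=\{1,\dots,v-1,x,y,v+1,\dots,m\}$ is the ordered set with $v-1<x<y<v+1$. *)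

theory Defs
  imports Complex_Main
begin

text \<open>Gale's evenness criterion: F is a facet of the cyclic polytope C(V,k)
  (V a finite linearly ordered set, k odd).\<close>
definition cyc_facet :: "'a::linorder set \<Rightarrow> nat \<Rightarrow> 'a set \<Rightarrow> bool" where
  "cyc_facet V k F \<longleftrightarrow> F \<subseteq> V \<and> card F = k \<and>
     ((\<forall>w\<in>V - F. even (card {u\<in>F. w < u})) \<or> (\<forall>w\<in>V - F. odd (card {u\<in>F. w < u})))"

definition pair_decomp :: "nat \<Rightarrow> nat set \<Rightarrow> nat set \<Rightarrow> nat \<Rightarrow> bool" where
  "pair_decomp m G S e \<longleftrightarrow> e \<in> {1, m} \<and> S \<subseteq> {1..<m} \<and>
     (\<forall>i\<in>S. \<forall>j\<in>S. i \<noteq> j \<longrightarrow> {i, Suc i} \<inter> {j, Suc j} = {}) \<and>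
     e \<notin> (\<Union>i\<in>S. {i, Suc i}) \<and> G = insert e (\<Union>i\<in>S. {i, Suc i})"

definition vf_facet :: "nat \<Rightarrow> nat \<Rightarrow> nat \<Rightarrow> nat set \<Rightarrow> bool" where
  "vf_facet m d v F \<longleftrightarrow> F \<subseteq> {1..m} - {v} \<and> cyc_facet {1..m} (2*d+1) (insert v F)"

definition lower_facet :: "nat \<Rightarrow> nat \<Rightarrow> nat \<Rightarrow> nat set \<Rightarrow> bool" where
  "lower_facet m d v F \<longleftrightarrow> vf_facet m d v F \<and>
     (\<exists>S e. pair_decomp m (insert v F) S e \<and> v \<in> S)"

definition upper_facet :: "nat \<Rightarrow> nat \<Rightarrow> nat \<Rightarrow> nat set \<Rightarrow> bool" where
  "upper_facet m d v F \<longleftrightarrow> vf_facet m d v F \<and>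
     (\<exists>S e. pair_decomp m (insert v F) S e \<and> v - 1 \<in> S)"

text \<open>[m]_{v+} realised inside the reals, with v-1 < x < y < v+1.\<close>
definition vplus :: "nat \<Rightarrow> nat \<Rightarrow> real \<Rightarrow> real \<Rightarrow> real set" where
  "vplus m v x y = real ` ({1..m} - {v}) \<union> {x, y}"

end

theory Submission
  imports Defs
begin

text \<open>Write G for F \<union> {v} and count, for each point w, the elements of G above w.
  Sending v to y (or to x) embeds [m] into [m]_{v+} monotonically, so the gaps of [m]
  keep their counts and the single new gap x (resp. y) gets the count of v plus 1
  (resp. plus 0). On the side of [m], in a pair decomposition (S, e) the count of w is
  even iff (w < e \<longleftrightarrow> w \<in> S); conversely, if all gaps have count parity P, the
  elements of G whose count has parity opposite to P are the left ends of a pair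
  decomposition. So v is a left end iff its count is not of gap parity, which is Gale's
  condition at the new gap x; and v - 1 is a left end iff the count of v has gap parity,
  which is Gale's condition at y.\<close>

definition num_above :: "'a::linorder set \<Rightarrow> 'a \<Rightarrow> nat" where
  "num_above F w = card {u\<in>F. w < u}"

definition gale_parity :: "'a::linorder set \<Rightarrow> 'a set \<Rightarrow> bool \<Rightarrow> bool" where
  "gale_parity V F P \<longleftrightarrow> (\<forall>w\<in>V - F. even (num_above F w) = P)"

lemma cyc_facet_iff_gale_parity:
  "cyc_facet V k F \<longleftrightarrow> F \<subseteq> V \<and> card F = k \<and> (\<exists>P. gale_parity V F P)"
  unfolding cyc_facet_def gale_parity_def num_above_def by blast

lemma gale_parity_insert:
  assumes "p \<notin> F"
  shows "gale_parity (insert p V) F P \<longleftrightarrow> gale_parity V F P \<and> even (num_above F p) = P"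
  using assms unfolding gale_parity_def by auto

lemma num_above_image:
  assumes h: "strict_mono_on V h" and "F \<subseteq> V" "w \<in> V"
  shows "num_above (h ` F) (h w) = num_above F w"
proof -
  have "{t \<in> h ` F. h w < t} = h ` {u \<in> F. w < u}"
    using assms strict_mono_on_less[OF h] by blast
  moreover have "inj_on h {u \<in> F. w < u}"
    by (rule inj_on_subset[OF strict_mono_on_imp_inj_on[OF h]]) (use assms(2) in auto)
  ultimately show ?thesis
    unfolding num_above_def by (simp add: card_image)
qed

lemma gale_parity_image:
  assumes h: "strict_mono_on V h" and F: "F \<subseteq> V"
  shows "gale_parity (h ` V) (h ` F) P \<longleftrightarrow> gale_parity V F P"
proof -
  have "h ` V - h ` F = h ` (V - F)"
    using strict_mono_on_imp_inj_on[OF h] F by (simp add: inj_on_image_set_diff)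
  then show ?thesis
    unfolding gale_parity_def using num_above_image[OF h F] by auto
qed

lemma num_above_Suc:
  assumes "finite G"
  shows "num_above G a = num_above G (Suc a) + (if Suc a \<in> G then 1 else 0)"
proof -
  have "{u\<in>G. a < u} = {u\<in>G. Suc a < u} \<union> ({Suc a} \<inter> G)" by auto
  then show ?thesis
    unfolding num_above_def using assms by (auto simp: card_insert_if)
qed

lemma pair_decomp_even_num_above:
  assumes "pair_decomp m G S e"
  shows "even (num_above G w) \<longleftrightarrow> (w < e \<longleftrightarrow> w \<in> S)"
proof -
  have S: "S \<subseteq> {1..<m}"
    and disj: "\<forall>i\<in>S. \<forall>j\<in>S. i \<noteq> j \<longrightarrow> {i, Suc i} \<inter> {j, Suc j} = {}"
    and e: "e \<notin> (\<Union>i\<in>S. {i, Suc i})" and G: "G = insert e (\<Union>i\<in>S. {i, Suc i})"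
    using assms unfolding pair_decomp_def by auto
  have fin: "finite S" using S finite_subset by blast
  define above where "above A = {u\<in>A. w < u}" for A :: "nat set"
  have "above G = above {e} \<union> (\<Union>i\<in>S. above {i, Suc i})"
    unfolding G above_def by auto
  moreover have "above {e} \<inter> (\<Union>i\<in>S. above {i, Suc i}) = {}"
    using e unfolding above_def by auto
  moreover have "card (\<Union>i\<in>S. above {i, Suc i}) = (\<Sum>i\<in>S. card (above {i, Suc i}))"
    using fin disj unfolding above_def by (intro card_UN_disjoint) auto
  moreover have "finite (above {e})" "finite (\<Union>i\<in>S. above {i, Suc i})"
    using fin unfolding above_def by auto
  ultimately have "num_above G w = card (above {e}) + (\<Sum>i\<in>S. card (above {i, Suc i}))"
    unfolding num_above_def above_def[symmetric] by (simp add: card_Un_disjoint)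
  moreover have "above {e} = (if w < e then {e} else {})"
    unfolding above_def by auto
  moreover have "even (\<Sum>i\<in>S. card (above {i, Suc i})) \<longleftrightarrow> w \<notin> S"
  proof -
    have "above {i, Suc i} = (if w < i then {i, Suc i} else if w = i then {Suc i} else {})" for i
      unfolding above_def by auto
    then have "odd (card (above {i, Suc i})) \<longleftrightarrow> i = w" for i
      by simp
    then show ?thesis
      using fin by (simp add: even_sum_iff Collect_conv_if)
  qed
  ultimately show ?thesis by auto
qed

lemma pair_decomp_gale_parity:
  assumes "pair_decomp m G S e"
  shows "gale_parity {1..m} G (e \<noteq> m)"
proof -
  have "e \<in> {1, m}" "S \<subseteq> G" "e \<in> G"
    using assms unfolding pair_decomp_def by auto
  then have "w \<notin> S \<and> (w < e \<longleftrightarrow> e = m)" if "w \<in> {1..m} - G" for w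
    using that by (auto simp: order_le_less)
  then show ?thesis
    unfolding gale_parity_def using pair_decomp_even_num_above[OF assms] by auto
qed

lemma pair_decomp_odd_num_above:
  assumes "pair_decomp m G S e" and "i \<in> S"
  shows "odd (num_above G i) \<longleftrightarrow> e \<noteq> m"
proof -
  have "e \<in> {1, m}" "i \<in> {1..<m}"
    using assms unfolding pair_decomp_def by auto
  then have "i < e \<longleftrightarrow> e = m" by auto
  then show ?thesis
    using pair_decomp_even_num_above[OF assms(1), of i] assms(2) by auto
qed

lemma gale_parity_gap:
  assumes "gale_parity V G P" and "w \<in> V" and "w \<notin> G"
  shows "even (num_above G w) = P"
  using assms unfolding gale_parity_def by blast

text \<open>Read with P the parity of the gaps: a is a left end of a pair exactly when
  Suc a is a right end.\<close>
lemma gale_parity_left_right: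
  assumes G: "G \<subseteq> {1..m}" and P: "gale_parity {1..m} G P" and a: "1 \<le> a" "a < m"
  shows "a \<in> G \<and> odd (num_above G a) = P \<longleftrightarrow> Suc a \<in> G \<and> even (num_above G (Suc a)) = P"
proof -
  have "finite G" using G finite_subset by blast
  then have "num_above G a = num_above G (Suc a) + (if Suc a \<in> G then 1 else 0)"
    by (rule num_above_Suc)
  then show ?thesis
    using gale_parity_gap[OF P, of a] gale_parity_gap[OF P, of "Suc a"] a by (cases "a \<in> G") auto
qed

lemma pair_decomp_of_gale_parity:
  assumes G: "G \<subseteq> {1..m}" and odd: "odd (card G)" and P: "gale_parity {1..m} G P"
  defines "S \<equiv> {i\<in>G. i < m \<and> odd (num_above G i) = P}" and "e \<equiv> if P then 1 else m"
  shows "pair_decomp m G S e"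
proof -
  note left_right = gale_parity_left_right[OF G P]
  note gap = gale_parity_gap[OF P]
  have "G \<noteq> {}" using odd by auto
  then have m: "1 \<le> m" using G by auto
  have "{u\<in>G. m < u} = {}" using G by auto
  then have top: "num_above G m = 0"
    unfolding num_above_def by (metis card.empty)
  have bot: "even (num_above G 1) \<longleftrightarrow> 1 \<in> G"
  proof -
    have "{u\<in>G. 1 < u} = G - {1}" using G by auto
    then show ?thesis
      unfolding num_above_def using odd G finite_subset by (cases "1 \<in> G") auto
  qed
  have eG: "e \<in> G"
    using gap[of 1] gap[of m] bot top m unfolding e_def by (cases P) auto
  have S_Suc: "Suc i \<in> G \<and> even (num_above G (Suc i)) = P" if "i \<in> S" for i
    using that left_right[of i] G unfolding S_def by auto
  have disj: "\<forall>i\<in>S. \<forall>j\<in>S. i \<noteq> j \<longrightarrow> {i, Suc i} \<inter> {j, Suc j} = {}"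
  proof (intro ballI impI)
    fix i j assume "i \<in> S" "j \<in> S" "i \<noteq> j"
    then have "j \<noteq> Suc i" "i \<noteq> Suc j"
      using S_Suc unfolding S_def by auto
    with \<open>i \<noteq> j\<close> show "{i, Suc i} \<inter> {j, Suc j} = {}" by auto
  qed
  have e_free: "e \<notin> (\<Union>i\<in>S. {i, Suc i})"
    using S_Suc bot top G unfolding S_def e_def by (cases P) fastforce+
  have cover: "h \<in> insert e (\<Union>i\<in>S. {i, Suc i})" if "h \<in> G" for h
  proof (cases "odd (num_above G h) = P")
    case True
    then have "h = e \<or> h < m" using top G \<open>h \<in> G\<close> unfolding e_def by fastforce
    then show ?thesis using True \<open>h \<in> G\<close> unfolding S_def by auto
  next
    case False
    show ?thesis
    proof (cases "h = 1")
      case True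
      then show ?thesis using False bot \<open>h \<in> G\<close> unfolding e_def by auto
    next
      case h: False
      then obtain a where "h = Suc a" "1 \<le> a" "a < m"
        using G \<open>h \<in> G\<close> by (cases h) auto
      then have "a \<in> S" using left_right[of a] False \<open>h \<in> G\<close> unfolding S_def by auto
      then show ?thesis using \<open>h = Suc a\<close> by auto
    qed
  qed
  have "G = insert e (\<Union>i\<in>S. {i, Suc i})"
    using eG S_Suc cover unfolding S_def by auto
  moreover have "S \<subseteq> {1..<m}" "e \<in> {1, m}"
    using G unfolding S_def e_def by auto
  ultimately show ?thesis
    unfolding pair_decomp_def using disj e_free by blast
qed

lemma ex_pair_decomp_mem_iff:
  assumes G: "G \<subseteq> {1..m}" and odd: "odd (card G)" and i: "i < m"
  shows "(\<exists>S e. pair_decomp m G S e \<and> i \<in> S) \<longleftrightarrow>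
    i \<in> G \<and> (\<exists>P. gale_parity {1..m} G P \<and> odd (num_above G i) = P)"
proof
  assume "\<exists>S e. pair_decomp m G S e \<and> i \<in> S"
  then obtain S e where D: "pair_decomp m G S e" "i \<in> S" by blast
  then have "i \<in> G" unfolding pair_decomp_def by auto
  then show "i \<in> G \<and> (\<exists>P. gale_parity {1..m} G P \<and> odd (num_above G i) = P)"
    using pair_decomp_gale_parity[OF D(1)] pair_decomp_odd_num_above[OF D] by blast
next
  assume "i \<in> G \<and> (\<exists>P. gale_parity {1..m} G P \<and> odd (num_above G i) = P)"
  then obtain P where "i \<in> G" "gale_parity {1..m} G P" "odd (num_above G i) = P" by blast
  then show "\<exists>S e. pair_decomp m G S e \<and> i \<in> S"
    using pair_decomp_of_gale_parity[OF G odd, of P] i by blast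
qed

lemma vf_facet_iff_gale_parity:
  assumes "F \<subseteq> {1..m} - {v}" and "v \<in> {1..m}"
  shows "vf_facet m d v F \<longleftrightarrow>
    card (insert v F) = 2*d+1 \<and> (\<exists>P. gale_parity {1..m} (insert v F) P)"
  using assms unfolding vf_facet_def cyc_facet_iff_gale_parity by auto

lemma lower_facet_iff_gale_parity:
  assumes F: "F \<subseteq> {1..m} - {v}" and v: "1 \<le> v" "v < m"
  shows "lower_facet m d v F \<longleftrightarrow> card (insert v F) = 2*d+1 \<and>
    (\<exists>P. gale_parity {1..m} (insert v F) P \<and> odd (num_above (insert v F) v) = P)"
proof (cases "card (insert v F) = 2*d+1")
  case True
  have "insert v F \<subseteq> {1..m}" "v \<in> {1..m}" "odd (card (insert v F))"
    using F v True by auto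
  then show ?thesis
    unfolding lower_facet_def vf_facet_iff_gale_parity[OF F \<open>v \<in> {1..m}\<close>]
    using ex_pair_decomp_mem_iff[of "insert v F" m v] v by auto
qed (simp add: lower_facet_def vf_facet_def cyc_facet_def)

lemma upper_facet_iff_gale_parity:
  assumes F: "F \<subseteq> {1..m} - {v}" and v: "2 \<le> v" "v \<le> m"
  shows "upper_facet m d v F \<longleftrightarrow> card (insert v F) = 2*d+1 \<and>
    (\<exists>P. gale_parity {1..m} (insert v F) P \<and> even (num_above (insert v F) v) = P)"
proof (cases "card (insert v F) = 2*d+1")
  case True
  define G where "G = insert v F"
  have G: "G \<subseteq> {1..m}" "odd (card G)" and "v \<in> {1..m}" "v - 1 \<in> {1..m}" "v - 1 < m"
    using F v True unfolding G_def by auto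
  have "num_above G (v - 1) = num_above G v + 1"
    using num_above_Suc[of G "v - 1"] G(1) finite_subset v unfolding G_def by auto
  then have "v - 1 \<in> G \<and> odd (num_above G (v - 1)) = P \<longleftrightarrow> even (num_above G v) = P"
    if "gale_parity {1..m} G P" for P
    using gale_parity_gap[OF that \<open>v - 1 \<in> {1..m}\<close>] by (cases "v - 1 \<in> G") auto
  then have "(\<exists>S e. pair_decomp m G S e \<and> v - 1 \<in> S) \<longleftrightarrow>
      (\<exists>P. gale_parity {1..m} G P \<and> even (num_above G v) = P)"
    using ex_pair_decomp_mem_iff[OF G \<open>v - 1 < m\<close>] by blast
  then show ?thesis
    unfolding upper_facet_def vf_facet_iff_gale_parity[OF F \<open>v \<in> {1..m}\<close>] G_def[symmetric]
    using True by auto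
qed (simp add: upper_facet_def vf_facet_def cyc_facet_def)

lemma of_nat_less_near_iff:
  fixes t :: real
  assumes "real v - 1 < t" "t < real v + 1" and "u \<noteq> v"
  shows "t < real u \<longleftrightarrow> v < u" and "real u < t \<longleftrightarrow> u < v"
proof -
  have "real u + 1 \<le> real v \<or> real v + 1 \<le> real u"
    using assms(3) by (cases "u < v") (simp_all add: nat_neq_iff flip: of_nat_Suc)
  then show "t < real u \<longleftrightarrow> v < u" "real u < t \<longleftrightarrow> u < v"
    using assms(1,2) by (auto simp flip: of_nat_less_iff)
qed

lemma strict_mono_on_replace_near:
  fixes z :: real
  assumes "real v - 1 < z" "z < real v + 1"
  shows "strict_mono_on A (\<lambda>u. if u = v then z else real u)"
  by (rule strict_mono_onI) (auto simp: of_nat_less_near_iff[OF assms])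

lemma cyc_facet_split_vertex_iff:
  fixes z z' :: real
  assumes v: "v \<in> {1..m}" and F: "F \<subseteq> {1..m} - {v}"
    and z: "real v - 1 < z" "z < real v + 1" and z': "real v - 1 < z'" "z' < real v + 1" "z' \<noteq> z"
  shows "cyc_facet (insert z' (insert z (real ` ({1..m} - {v})))) k (insert z (real ` F)) \<longleftrightarrow>
    card (insert v F) = k \<and> (\<exists>P. gale_parity {1..m} (insert v F) P \<and>
      even (num_above (insert v F) v + (if z' < z then 1 else 0)) = P)"
proof -
  define h where "h u = (if u = v then z else real u)" for u
  define G where "G = insert v F"
  have mono: "strict_mono_on A h" for A
    unfolding h_def by (rule strict_mono_on_replace_near[OF z])
  have G: "G \<subseteq> {1..m}" "finite G" "v \<in> G"
    using v F finite_subset unfolding G_def by auto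
  have V: "insert z (real ` ({1..m} - {v})) = h ` {1..m}"
    using v unfolding h_def by force
  have FG: "insert z (real ` F) = h ` G"
    using F unfolding h_def G_def by force
  have above_z': "{u\<in>G. z' < h u} = (if z' < z then insert v {u\<in>G. v < u} else {u\<in>G. v < u})"
    using G(3) of_nat_less_near_iff(1)[OF z'(1,2)] unfolding h_def by auto
  have "num_above (h ` G) z' = card {u\<in>G. z' < h u}"
  proof -
    have "{t\<in>h ` G. z' < t} = h ` {u\<in>G. z' < h u}" by auto
    moreover have "inj_on h {u\<in>G. z' < h u}"
      using strict_mono_on_imp_inj_on[OF mono] .
    ultimately show ?thesis unfolding num_above_def by (simp add: card_image)
  qed
  also have "\<dots> = num_above G v + (if z' < z then 1 else 0)"
    unfolding above_z' num_above_def using G(2) by simp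
  finally have count_z': "num_above (h ` G) z' = num_above G v + (if z' < z then 1 else 0)" .
  have z'_new: "z' \<notin> h ` G"
    using z'(3) of_nat_less_near_iff[OF z'(1,2)] unfolding h_def by (auto simp: nat_neq_iff)
  have "gale_parity (insert z' (h ` {1..m})) (h ` G) P \<longleftrightarrow>
      gale_parity {1..m} G P \<and> even (num_above G v + (if z' < z then 1 else 0)) = P" for P
    unfolding gale_parity_insert[OF z'_new] gale_parity_image[OF mono G(1)] count_z' by (rule refl)
  moreover have "card (h ` G) = card G"
    using strict_mono_on_imp_inj_on[OF mono] by (rule card_image)
  moreover have "h ` G \<subseteq> insert z' (h ` {1..m})"
    using G(1) by auto
  ultimately show ?thesis
    unfolding V FG cyc_facet_iff_gale_parity G_def[symmetric] by auto
qed

theorem lemma4p7: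
  fixes m d v :: nat and F :: "nat set" and x y :: real
  assumes "2 \<le> v" and "v \<le> m - 1"
    and "real v - 1 < x" and "x < y" and "y < real v + 1"
    and "F \<subseteq> {1..m} - {v}"
  shows "(lower_facet m d v F \<longleftrightarrow> cyc_facet (vplus m v x y) (2*d+1) (insert y (real ` F)))
       \<and> (upper_facet m d v F \<longleftrightarrow> cyc_facet (vplus m v x y) (2*d+1) (insert x (real ` F)))"
proof -
  have v: "v \<in> {1..m}" "1 \<le> v" "v < m" "v \<le> m"
    using assms(1,2) by auto
  have x: "real v - 1 < x" "x < real v + 1" "x \<noteq> y"
    and y: "real v - 1 < y" "y < real v + 1" "y \<noteq> x"
    using assms(3-5) by auto
  have "vplus m v x y = insert x (insert y (real ` ({1..m} - {v})))"
    and "vplus m v x y = insert y (insert x (real ` ({1..m} - {v})))"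
    unfolding vplus_def by auto
  then show ?thesis
    using lower_facet_iff_gale_parity[OF assms(6) v(2,3)]
      upper_facet_iff_gale_parity[OF assms(6) assms(1) v(4)]
      cyc_facet_split_vertex_iff[OF v(1) assms(6) y(1,2) x]
      cyc_facet_split_vertex_iff[OF v(1) assms(6) x(1,2) y]
      assms(4)
    by auto
qed

end
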